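(* Let $D$ be a digraph and $v_0\in V(D)$ such that $d^+(v_0)\ge1$ and $d^+(v)\ge2$ for every $v\in V(D)\setminus\{v_0\}$. Then $D$ contains a subdivision of $\overleftrightarrow{K}_3-e$.
   Context: Digraphs are finite, loopless, have no parallel arcs, but may contain digons. $d^+(v)$ is the out-degree of $v$. $\overleftrightarrow{K}_3$ is the bioriented triangle (both arcs between every pair of its three vertices), and $\overleftrightarrow{K}_3-e$ is obtained from it by deleting one arc. A subdivision of a digraph $F$ is obtained by replacing each arc $(x,y)$ by a directed $x$-$y$-path, with paths for different arcs internally vertex-disjoint. *)

theory Defs
  imports Main
begin

text \<open>A digraph is a pair of a vertex set V and an arc set A (a set of ordered pairs,
  so no parallel arcs; digons allowed). It is finite and loopless.\<close>
definition digraph :: "'a set \<Rightarrow> ('a \<times> 'a) set \<Rightarrow> bool" where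
  "digraph V A \<longleftrightarrow> finite V \<and> A \<subseteq> V \<times> V \<and> (\<forall>v. (v, v) \<notin> A)"

definition out_degree :: "('a \<times> 'a) set \<Rightarrow> 'a \<Rightarrow> nat" where
  "out_degree A v = card {w. (v, w) \<in> A}"

definition dipath :: "('a \<times> 'a) set \<Rightarrow> 'a list \<Rightarrow> bool" where
  "dipath A p \<longleftrightarrow> 2 \<le> length p \<and> distinct p \<and> (\<forall>i. Suc i < length p \<longrightarrow> (p ! i, p ! Suc i) \<in> A)"

definition inner_vertices :: "'a list \<Rightarrow> 'a set" where
  "inner_vertices p = set (butlast (tl p))"

text \<open>D = (V,A) contains a subdivision of F = (VF,AF): the branch vertices are embedded
  injectively, each arc (x,y) of F is realised by a directed path from the image of x to
  the image of y, and the paths are internally vertex-disjoint from each other and from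
  the branch vertices.\<close>
definition contains_subdivision ::
  "'b set \<Rightarrow> ('b \<times> 'b) set \<Rightarrow> 'a set \<Rightarrow> ('a \<times> 'a) set \<Rightarrow> bool" where
  "contains_subdivision VF AF V A \<longleftrightarrow>
     (\<exists>f P. inj_on f VF \<and> f ` VF \<subseteq> V \<and>
        (\<forall>e\<in>AF. dipath A (P e) \<and> hd (P e) = f (fst e) \<and> last (P e) = f (snd e)
                 \<and> set (P e) \<subseteq> V \<and> inner_vertices (P e) \<inter> f ` VF = {}) \<and>
        (\<forall>e\<in>AF. \<forall>e'\<in>AF. e \<noteq> e' \<longrightarrow> inner_vertices (P e) \<inter> inner_vertices (P e') = {}))"

definition K3_bi_minus_e_V :: "nat set" where
  "K3_bi_minus_e_V = {0, 1, 2}"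

definition K3_bi_minus_e_A :: "(nat \<times> nat) set" where
  "K3_bi_minus_e_A = {(x, y). x \<in> {0,1,2} \<and> y \<in> {0,1,2} \<and> x \<noteq> y} - {(0, 1)}"

end

theory Submission
  imports Defs "HOL-Library.Transitive_Closure_Table"
begin

text \<open>
  Induction on the number of arcs. Deleting an arc at a vertex of surplus out-degree preserves
  the hypothesis, so we may assume that v0 has out-degree 1 and every other vertex out-degree 2.
  Then there are 2|V| - 1 arcs, so some vertex v has in-degree at most 1. A source is deleted
  (an out-neighbour of v0 becomes the root if v = v0); if v = v0 has a unique in-neighbour u,
  then v0 is deleted and u becomes the root. Otherwise v \<noteq> v0 has a unique in-neighbour u.
  If v has an out-neighbour t that is neither u nor an out-neighbour of u, the path u v t is
  contracted to the arc u t: degrees are preserved, and a subdivision in the contracted digraph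
  lifts back by re-inserting v on the arc u t. If not, v and u form a digon and have a common
  out-neighbour w. Either u is reachable from w avoiding v, and that path together with the arcs
  u w, u v, v u, v w is a subdivision of K3 - e; or the vertices reachable from w avoiding v
  span a smaller digraph closed under out-arcs, which again satisfies the hypothesis.
\<close>

lemma dipath_iff_successively:
  "dipath A p \<longleftrightarrow> 2 \<le> length p \<and> distinct p \<and> successively (\<lambda>x y. (x, y) \<in> A) p"
  unfolding dipath_def successively_conv_nth by simp

lemma dipath_mono: "dipath A p \<Longrightarrow> A \<subseteq> B \<Longrightarrow> dipath B p"
  unfolding dipath_def by blast

lemma dipath_arc: "(x, y) \<in> A \<Longrightarrow> x \<noteq> y \<Longrightarrow> dipath A [x, y]"
  unfolding dipath_iff_successively by simp

lemma set_dipath_subset: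
  assumes "dipath A p" "A \<subseteq> V \<times> V"
  shows "set p \<subseteq> V"
proof -
  have "successively (\<lambda>x y. (x, y) \<in> A) p \<Longrightarrow> length p \<noteq> 1 \<Longrightarrow> set p \<subseteq> V" for p
    using assms(2) by (induction "\<lambda>x y. (x, y) \<in> A" p rule: successively.induct) fastforce+
  then show ?thesis using assms(1) unfolding dipath_iff_successively by simp
qed

lemma hd_butlast_tl_last:
  "2 \<le> length p \<Longrightarrow> p = hd p # butlast (tl p) @ [last p]"
  by (cases p) (auto simp: last_tl)

lemma hd_neq_last:
  assumes "2 \<le> length p" "distinct p"
  shows "hd p \<noteq> last p"
  using arg_cong[OF hd_butlast_tl_last[OF assms(1)], of distinct] assms(2) by auto

lemma set_eq_inner_vertices_Un:
  assumes "2 \<le> length p"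
  shows "set p = inner_vertices p \<union> {hd p, last p}"
proof -
  have "set p = set (hd p # butlast (tl p) @ [last p])"
    using arg_cong[OF hd_butlast_tl_last[OF assms], of set] .
  then show ?thesis unfolding inner_vertices_def by auto
qed

lemma inner_vertices_eq_Diff:
  assumes "2 \<le> length p" "distinct p"
  shows "inner_vertices p = set p - {hd p, last p}"
proof -
  have "distinct (hd p # butlast (tl p) @ [last p])"
    using arg_cong[OF hd_butlast_tl_last[OF assms(1)], of distinct] assms(2) by simp
  then have "hd p \<notin> inner_vertices p" "last p \<notin> inner_vertices p"
    unfolding inner_vertices_def by auto
  then show ?thesis using set_eq_inner_vertices_Un[OF assms(1)] by blast
qed

lemma set_zip_tl_subset: "(x, y) \<in> set (zip p (tl p)) \<Longrightarrow> x \<in> set p \<and> y \<in> set p"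
  by (cases p) (auto dest: set_zip_leftD set_zip_rightD)

lemma inner_vertices_subset_set: "inner_vertices p \<subseteq> set p"
  unfolding inner_vertices_def by (cases p) (auto dest: in_set_butlastD)

lemma inner_vertices_arc: "inner_vertices [x, y] = {}"
  unfolding inner_vertices_def by simp

lemma rtrancl_obtains_dipath:
  assumes "(x, y) \<in> A\<^sup>*" "x \<noteq> y"
  obtains p where "dipath A p" "hd p = x" "last p = y"
proof -
  obtain xs where "rtrancl_path (\<lambda>a b. (a, b) \<in> A) x xs y"
    using assms(1) rtranclp_eq_rtrancl_path[of "\<lambda>a b. (a, b) \<in> A"] by (auto simp: rtrancl_def)
  then obtain ys where ys: "rtrancl_path (\<lambda>a b. (a, b) \<in> A) x ys y" "distinct (x # ys)"
    by (rule rtrancl_path_distinct)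
  have "ys \<noteq> []" using ys(1) assms(2) by (auto elim: rtrancl_path.cases)
  moreover have "successively (\<lambda>a b. (a, b) \<in> A) (x # ys)"
    using rtrancl_path_nth[OF ys(1)] unfolding successively_conv_nth by auto
  ultimately have "dipath A (x # ys)"
    using ys(2) unfolding dipath_iff_successively by (cases ys) auto
  moreover have "last (x # ys) = y" using rtrancl_path_last[OF ys(1)] \<open>ys \<noteq> []\<close> by simp
  ultimately show thesis using that by simp
qed

lemma rtrancl_induced_subset:
  assumes "(x, y) \<in> (A \<inter> X \<times> X)\<^sup>*" "x \<in> X"
  shows "y \<in> X"
  using assms by (induction rule: rtrancl_induct) auto

lemma contains_subdivisionI:
  assumes "inj_on f VF" "f ` VF \<subseteq> V"
    and "\<And>e. e \<in> AF \<Longrightarrow> dipath A (P e)"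
    and "\<And>e. e \<in> AF \<Longrightarrow> hd (P e) = f (fst e)"
    and "\<And>e. e \<in> AF \<Longrightarrow> last (P e) = f (snd e)"
    and "\<And>e. e \<in> AF \<Longrightarrow> set (P e) \<subseteq> V"
    and "\<And>e. e \<in> AF \<Longrightarrow> inner_vertices (P e) \<inter> f ` VF = {}"
    and "\<And>e e'. e \<in> AF \<Longrightarrow> e' \<in> AF \<Longrightarrow> e \<noteq> e' \<Longrightarrow>
           inner_vertices (P e) \<inter> inner_vertices (P e') = {}"
  shows "contains_subdivision VF AF V A"
  unfolding contains_subdivision_def
  by (intro exI[of _ f] exI[of _ P] conjI ballI impI) (use assms in simp_all)

lemma contains_subdivisionE:
  assumes "contains_subdivision VF AF V A"
  obtains f P where "inj_on f VF" "f ` VF \<subseteq> V"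
    and "\<And>e. e \<in> AF \<Longrightarrow> dipath A (P e)"
    and "\<And>e. e \<in> AF \<Longrightarrow> hd (P e) = f (fst e)"
    and "\<And>e. e \<in> AF \<Longrightarrow> last (P e) = f (snd e)"
    and "\<And>e. e \<in> AF \<Longrightarrow> set (P e) \<subseteq> V"
    and "\<And>e. e \<in> AF \<Longrightarrow> inner_vertices (P e) \<inter> f ` VF = {}"
    and "\<And>e e'. e \<in> AF \<Longrightarrow> e' \<in> AF \<Longrightarrow> e \<noteq> e' \<Longrightarrow>
           inner_vertices (P e) \<inter> inner_vertices (P e') = {}"
proof -
  obtain f P where H: "inj_on f VF" "f ` VF \<subseteq> V"
    "\<forall>e\<in>AF. dipath A (P e) \<and> hd (P e) = f (fst e) \<and> last (P e) = f (snd e)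
                 \<and> set (P e) \<subseteq> V \<and> inner_vertices (P e) \<inter> f ` VF = {}"
    "\<forall>e\<in>AF. \<forall>e'\<in>AF. e \<noteq> e' \<longrightarrow> inner_vertices (P e) \<inter> inner_vertices (P e') = {}"
    using assms unfolding contains_subdivision_def by (elim exE conjE) (rule that)
  show thesis by (rule that[of f P]) (use H in simp_all)
qed

lemma contains_subdivision_mono:
  assumes "contains_subdivision VF AF V' A'" "V' \<subseteq> V" "A' \<subseteq> A"
  shows "contains_subdivision VF AF V A"
  using assms(1)
proof (rule contains_subdivisionE)
  fix f P
  assume H: "inj_on f VF" "f ` VF \<subseteq> V'"
    "\<And>e. e \<in> AF \<Longrightarrow> dipath A' (P e)"
    "\<And>e. e \<in> AF \<Longrightarrow> hd (P e) = f (fst e)"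
    "\<And>e. e \<in> AF \<Longrightarrow> last (P e) = f (snd e)"
    "\<And>e. e \<in> AF \<Longrightarrow> set (P e) \<subseteq> V'"
    "\<And>e. e \<in> AF \<Longrightarrow> inner_vertices (P e) \<inter> f ` VF = {}"
    "\<And>e e'. e \<in> AF \<Longrightarrow> e' \<in> AF \<Longrightarrow> e \<noteq> e' \<Longrightarrow>
       inner_vertices (P e) \<inter> inner_vertices (P e') = {}"
  show ?thesis
  proof (rule contains_subdivisionI[of f VF V AF A P])
    show "dipath A (P e)" if "e \<in> AF" for e
      using dipath_mono[OF H(3)[OF that] assms(3)] .
    show "f ` VF \<subseteq> V" using H(2) assms(2) by blast
    show "set (P e) \<subseteq> V" if "e \<in> AF" for e using H(6)[OF that] assms(2) by blast
  qed (fact H)+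
qed

fun subdivide_arc :: "'a \<Rightarrow> 'a \<Rightarrow> 'a \<Rightarrow> 'a list \<Rightarrow> 'a list" where
  "subdivide_arc u v t (x # y # zs) =
     x # (if x = u \<and> y = t then v # subdivide_arc u v t (y # zs) else subdivide_arc u v t (y # zs))"
| "subdivide_arc u v t zs = zs"

lemma hd_subdivide_arc [simp]: "hd (subdivide_arc u v t p) = hd p"
  by (cases "(u, v, t, p)" rule: subdivide_arc.cases) auto

lemma subdivide_arc_eq_Nil_iff: "subdivide_arc u v t p = [] \<longleftrightarrow> p = []"
  by (cases "(u, v, t, p)" rule: subdivide_arc.cases) auto

lemma last_subdivide_arc [simp]: "last (subdivide_arc u v t p) = last p"
  by (induction u v t p rule: subdivide_arc.induct) (auto simp: subdivide_arc_eq_Nil_iff)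

lemma length_subdivide_arc: "length p \<le> length (subdivide_arc u v t p)"
  by (induction u v t p rule: subdivide_arc.induct) auto

lemma set_subdivide_arc:
  "set (subdivide_arc u v t p) = set p \<union> (if (u, t) \<in> set (zip p (tl p)) then {v} else {})"
  by (induction u v t p rule: subdivide_arc.induct) auto

lemma successively_subdivide_arc:
  assumes "successively (\<lambda>x y. (x, y) \<in> A') p" "A' \<subseteq> A \<union> {(u, t)}" "(u, v) \<in> A" "(v, t) \<in> A"
  shows "successively (\<lambda>x y. (x, y) \<in> A) (subdivide_arc u v t p)"
  using assms(1) by (induction p rule: induct_list012)
    (use assms(2-4) in \<open>auto simp: successively_Cons subdivide_arc_eq_Nil_iff\<close>)

lemma distinct_subdivide_arc:
  assumes "distinct p" "v \<notin> set p"
  shows "distinct (subdivide_arc u v t p)"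
  using assms
  by (induction p rule: induct_list012) (auto simp: set_subdivide_arc dest: in_set_zipE)

lemma inner_vertices_subdivide_arc:
  assumes "2 \<le> length p" "distinct p" "v \<notin> set p"
  shows "inner_vertices (subdivide_arc u v t p) =
           inner_vertices p \<union> (if (u, t) \<in> set (zip p (tl p)) then {v} else {})"
proof -
  have "2 \<le> length (subdivide_arc u v t p)"
    using assms(1) length_subdivide_arc[of p u v t] by linarith
  then have "inner_vertices (subdivide_arc u v t p) =
      set (subdivide_arc u v t p) - {hd (subdivide_arc u v t p), last (subdivide_arc u v t p)}"
    using inner_vertices_eq_Diff distinct_subdivide_arc[OF assms(2,3)] by blast
  also have "\<dots> = (set p \<union> (if (u, t) \<in> set (zip p (tl p)) then {v} else {})) - {hd p, last p}"
    by (simp only: hd_subdivide_arc last_subdivide_arc set_subdivide_arc)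
  also have "\<dots> = inner_vertices p \<union> (if (u, t) \<in> set (zip p (tl p)) then {v} else {})"
  proof -
    have "p \<noteq> []" using assms(1) by auto
    then have "hd p \<in> set p" "last p \<in> set p" by simp_all
    then show ?thesis using inner_vertices_eq_Diff[OF assms(1,2)] assms(3) by auto
  qed
  finally show ?thesis .
qed

lemma dipath_subdivide_arc:
  assumes "dipath A' p" "v \<notin> set p" "(u, v) \<in> A" "(v, t) \<in> A" "A' \<subseteq> A \<union> {(u, t)}"
  shows "dipath A (subdivide_arc u v t p)"
  using assms(1) length_subdivide_arc[of p u v t]
    successively_subdivide_arc[OF _ assms(5,3,4)] distinct_subdivide_arc[OF _ assms(2)]
  unfolding dipath_iff_successively by auto

lemma inner_vertices_subdivide_arc_disjoint:
  assumes p: "2 \<le> length p" "distinct p" "v \<notin> set p"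
    and q: "2 \<le> length q" "distinct q" "v \<notin> set q"
    and disjoint: "inner_vertices p \<inter> inner_vertices q = {}"
    and not_both: "\<not> ((u, t) \<in> set (zip p (tl p)) \<and> (u, t) \<in> set (zip q (tl q)))"
  shows "inner_vertices (subdivide_arc u v t p) \<inter> inner_vertices (subdivide_arc u v t q) = {}"
  using inner_vertices_subdivide_arc[OF p] inner_vertices_subdivide_arc[OF q]
    inner_vertices_subset_set[of p] inner_vertices_subset_set[of q] p(3) q(3) disjoint not_both
  by (cases "(u, t) \<in> set (zip p (tl p))"; cases "(u, t) \<in> set (zip q (tl q))") auto

lemma arc_outside_inner_vertices:
  assumes "2 \<le> length p" "distinct p" "(u, t) \<in> set (zip p (tl p))"
    and "u \<notin> inner_vertices p" "t \<notin> inner_vertices p"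
  shows "u = hd p \<and> t = last p"
proof -
  obtain i where "i < length p - 1" "u = p ! i" "t = p ! Suc i"
    using assms(3) by (auto simp: in_set_zip nth_tl)
  then have i: "Suc i < length p" "u = p ! i" "t = p ! Suc i" by arith+
  moreover have "p \<noteq> []" using i(1) by auto
  ultimately have "u \<noteq> last p" "t \<noteq> hd p"
    using assms(2) by (auto simp: last_conv_nth hd_conv_nth nth_eq_iff_index_eq)
  moreover have "u \<in> set p" "t \<in> set p" using i by auto
  ultimately show ?thesis using set_eq_inner_vertices_Un[OF assms(1)] assms(4,5) by blast
qed

lemma shared_arc_joins_ends:
  assumes p: "2 \<le> length p" "distinct p" and q: "2 \<le> length q"
    and arc: "(u, t) \<in> set (zip p (tl p))" "(u, t) \<in> set (zip q (tl q))"
    and disjoint: "inner_vertices p \<inter> inner_vertices q = {}" "inner_vertices p \<inter> {hd q, last q} = {}"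
  shows "u = hd p \<and> t = last p"
proof -
  have "set q \<inter> inner_vertices p = {}"
    using set_eq_inner_vertices_Un[OF q] disjoint by blast
  then have "u \<notin> inner_vertices p" "t \<notin> inner_vertices p"
    using set_zip_tl_subset[OF arc(2)] by blast+
  then show ?thesis by (rule arc_outside_inner_vertices[OF p arc(1)])
qed

lemma contains_subdivision_subdivide_arc:
  assumes sub: "contains_subdivision VF AF V' A'" and AF: "AF \<subseteq> VF \<times> VF"
    and V': "V' \<subseteq> V" and v: "v \<in> V" "v \<notin> V'"
    and arcs: "(u, v) \<in> A" "(v, t) \<in> A" "A' \<subseteq> A \<union> {(u, t)}"
  shows "contains_subdivision VF AF V A"
  using sub
proof (rule contains_subdivisionE)
  fix f P
  assume inj: "inj_on f VF" and f: "f ` VF \<subseteq> V'"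
    and P: "\<And>e. e \<in> AF \<Longrightarrow> dipath A' (P e)"
    and hd: "\<And>e. e \<in> AF \<Longrightarrow> hd (P e) = f (fst e)"
    and last: "\<And>e. e \<in> AF \<Longrightarrow> last (P e) = f (snd e)"
    and set: "\<And>e. e \<in> AF \<Longrightarrow> set (P e) \<subseteq> V'"
    and branch: "\<And>e. e \<in> AF \<Longrightarrow> inner_vertices (P e) \<inter> f ` VF = {}"
    and disj: "\<And>e e'. e \<in> AF \<Longrightarrow> e' \<in> AF \<Longrightarrow> e \<noteq> e' \<Longrightarrow>
                 inner_vertices (P e) \<inter> inner_vertices (P e') = {}"
  let ?arc = "\<lambda>e. (u, t) \<in> set (zip (P e) (tl (P e)))"
  have len: "2 \<le> length (P e)" and dist: "distinct (P e)" and v_notin: "v \<notin> set (P e)"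
    if "e \<in> AF" for e
    using P[OF that] set[OF that] v(2) unfolding dipath_def by auto
  have inner: "inner_vertices (subdivide_arc u v t (P e)) =
      inner_vertices (P e) \<union> (if ?arc e then {v} else {})" if "e \<in> AF" for e
    using inner_vertices_subdivide_arc[OF len dist v_notin, OF that that that] .
  have ends: "u = f (fst e) \<and> t = f (snd e)"
    if e: "e \<in> AF" "e' \<in> AF" "e \<noteq> e'" and arc: "?arc e" "?arc e'" for e e'
  proof -
    have "f (fst e') \<in> f ` VF" "f (snd e') \<in> f ` VF" using e(2) AF by auto
    then have "inner_vertices (P e) \<inter> {hd (P e'), last (P e')} = {}"
      using branch[OF e(1)] hd[OF e(2)] last[OF e(2)] by auto
    then show ?thesis
      using shared_arc_joins_ends[OF len[OF e(1)] dist[OF e(1)] len[OF e(2)] arc disj[OF e]]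
        hd[OF e(1)] last[OF e(1)] by simp
  qed
  show ?thesis
  proof (rule contains_subdivisionI[of f VF V AF A "\<lambda>e. subdivide_arc u v t (P e)"])
    show "f ` VF \<subseteq> V" using f V' by blast
    show "dipath A (subdivide_arc u v t (P e))" if "e \<in> AF" for e
      using dipath_subdivide_arc[OF P[OF that] v_notin[OF that] arcs] .
    show "set (subdivide_arc u v t (P e)) \<subseteq> V" if "e \<in> AF" for e
      using set[OF that] V' v(1) by (auto simp: set_subdivide_arc)
    show "inner_vertices (subdivide_arc u v t (P e)) \<inter> f ` VF = {}" if "e \<in> AF" for e
      using inner[OF that] branch[OF that] f v(2) by auto
    show "inner_vertices (subdivide_arc u v t (P e)) \<inter> inner_vertices (subdivide_arc u v t (P e')) = {}"
      if e: "e \<in> AF" "e' \<in> AF" "e \<noteq> e'" for e e'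
    proof (rule inner_vertices_subdivide_arc_disjoint)
      show "\<not> (?arc e \<and> ?arc e')"
      proof
        assume "?arc e \<and> ?arc e'"
        then have "f (fst e) = f (fst e')" "f (snd e) = f (snd e')"
          using ends[OF e] ends[OF e(2,1) e(3)[symmetric]] by auto
        moreover have "fst e \<in> VF" "snd e \<in> VF" "fst e' \<in> VF" "snd e' \<in> VF" using e AF by auto
        ultimately show False using e(3) inj unfolding inj_on_def by (auto simp: prod_eq_iff)
      qed
    qed (use len dist v_notin disj e in blast)+
  qed (use inj hd last in auto)
qed

abbreviation contains_K3_minus_e :: "'a set \<Rightarrow> ('a \<times> 'a) set \<Rightarrow> bool" where
  "contains_K3_minus_e V A \<equiv> contains_subdivision K3_bi_minus_e_V K3_bi_minus_e_A V A"

lemma K3_bi_minus_e_A_eq: "K3_bi_minus_e_A = {(0, 2), (2, 0), (1, 0), (1, 2), (2, 1)}"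
  unfolding K3_bi_minus_e_A_def by auto

lemma K3_bi_minus_e_A_subset: "K3_bi_minus_e_A \<subseteq> K3_bi_minus_e_V \<times> K3_bi_minus_e_V"
  unfolding K3_bi_minus_e_A_eq K3_bi_minus_e_V_def by auto

lemma contains_K3_bi_minus_e:
  assumes Q: "dipath A Q" "hd Q = b" "last Q = a" "c \<notin> set Q" "set Q \<subseteq> V"
    and arcs: "(a, b) \<in> A" "(a, c) \<in> A" "(c, a) \<in> A" "(c, b) \<in> A"
    and V: "a \<in> V" "b \<in> V" "c \<in> V"
  shows "contains_K3_minus_e V A"
proof -
  have "Q \<noteq> []" "hd Q \<noteq> last Q"
    using Q(1) hd_neq_last unfolding dipath_def by auto
  then have ne: "a \<noteq> b" "a \<noteq> c" "b \<noteq> c"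
    using Q(2-4) last_in_set hd_in_set by metis+
  define f :: "nat \<Rightarrow> 'a" where "f n = (if n = 0 then b else if n = 1 then c else a)" for n
  define P where "P e = (if e = (0, 2) then Q else [f (fst e), f (snd e)])" for e
  have f_image: "f ` K3_bi_minus_e_V = {a, b, c}"
    unfolding K3_bi_minus_e_V_def f_def by auto
  have inner_Q: "inner_vertices Q = set Q - {b, a}"
    using inner_vertices_eq_Diff Q(1-3) unfolding dipath_def by blast
  have inner_arc: "inner_vertices (P e) = {}" if "e \<noteq> (0, 2)" for e
    unfolding P_def using that inner_vertices_arc by simp
  show ?thesis
  proof (rule contains_subdivisionI[of f _ _ _ _ P])
    show "inj_on f K3_bi_minus_e_V"
      unfolding inj_on_def K3_bi_minus_e_V_def f_def using ne by auto
    show "f ` K3_bi_minus_e_V \<subseteq> V" unfolding f_image using V by blast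
    show "dipath A (P e)" if "e \<in> K3_bi_minus_e_A" for e
      using that Q(1) arcs ne unfolding K3_bi_minus_e_A_eq P_def f_def by (auto intro!: dipath_arc)
    show "hd (P e) = f (fst e)" "last (P e) = f (snd e)" "set (P e) \<subseteq> V"
      if "e \<in> K3_bi_minus_e_A" for e
      using that Q V unfolding K3_bi_minus_e_A_eq P_def f_def by auto
    show "inner_vertices (P e) \<inter> f ` K3_bi_minus_e_V = {}" for e
      using inner_arc[of e] inner_Q Q(4) unfolding f_image P_def by (cases "e = (0, 2)") auto
    show "inner_vertices (P e) \<inter> inner_vertices (P e') = {}" if "e \<noteq> e'" for e e'
      using that inner_arc[of e] inner_arc[of e'] by (cases "e = (0, 2)") auto
  qed
qed

definition in_degree :: "('a \<times> 'a) set \<Rightarrow> 'a \<Rightarrow> nat" where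
  "in_degree A v = card {u. (u, v) \<in> A}"

lemma finite_out_neighbours:
  assumes "digraph V A"
  shows "finite {w. (x, w) \<in> A}"
proof -
  have "{w. (x, w) \<in> A} \<subseteq> V" using assms unfolding digraph_def by auto
  then show ?thesis using assms finite_subset unfolding digraph_def by blast
qed

lemma finite_arcs: "digraph V A \<Longrightarrow> finite A"
  unfolding digraph_def by (auto intro: finite_subset)

lemma out_degree_ge_1_obtains:
  assumes "1 \<le> out_degree A x"
  obtains w where "(x, w) \<in> A"
  using assms unfolding out_degree_def by fastforce

lemma card_arcs_eq_sum_out_degree:
  assumes "digraph V A"
  shows "card A = (\<Sum>x\<in>V. out_degree A x)"
proof -
  have "card A = card (SIGMA x:V. {w. (x, w) \<in> A})"
    by (rule arg_cong[where f = card]) (use assms in \<open>auto simp: digraph_def\<close>)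
  also have "\<dots> = (\<Sum>x\<in>V. out_degree A x)"
    using assms finite_out_neighbours[OF assms] unfolding digraph_def out_degree_def by simp
  finally show ?thesis .
qed

lemma digraph_converse: "digraph V A \<Longrightarrow> digraph V (A\<inverse>)"
  unfolding digraph_def by auto

lemma card_arcs_eq_sum_in_degree: "digraph V A \<Longrightarrow> card A = (\<Sum>x\<in>V. in_degree A x)"
  using card_arcs_eq_sum_out_degree[OF digraph_converse] unfolding out_degree_def in_degree_def
  by simp

lemma exists_in_degree_le_1:
  assumes "digraph V A" "r \<in> V" "\<forall>x\<in>V. out_degree A x \<le> (if x = r then 1 else 2)"
  obtains v where "v \<in> V" "in_degree A v \<le> 1"
proof (rule ccontr)
  assume "\<not> thesis"
  then have in2: "\<forall>v\<in>V. 2 \<le> in_degree A v" using that by force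
  have "(\<Sum>x\<in>V. 2) \<le> card A"
    unfolding card_arcs_eq_sum_in_degree[OF assms(1)] using in2 by (intro sum_mono) blast
  also have "\<dots> \<le> (\<Sum>x\<in>V. if x = r then 1 else 2)"
    unfolding card_arcs_eq_sum_out_degree[OF assms(1)] using assms(3) by (intro sum_mono) blast
  also have "\<dots> < (\<Sum>x\<in>V. 2)"
    using assms(1,2) unfolding digraph_def by (intro sum_strict_mono_ex1) auto
  finally show False by simp
qed

lemma in_degree_le_1_cases:
  assumes "digraph V A" "in_degree A v \<le> 1"
  obtains "\<And>u. (u, v) \<notin> A" | u where "{y. (y, v) \<in> A} = {u}"
proof (cases "{y. (y, v) \<in> A} = {}")
  case False
  moreover have "finite {y. (y, v) \<in> A}"
    using finite_out_neighbours[OF digraph_converse[OF assms(1)]] by simp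
  ultimately have "card {y. (y, v) \<in> A} \<noteq> 0" by simp
  then have "card {y. (y, v) \<in> A} = 1" using assms(2) unfolding in_degree_def by linarith
  then obtain u where "{y. (y, v) \<in> A} = {u}" by (rule card_1_singletonE)
  then show thesis by (rule that(2))
qed (use that(1) in blast)

lemma digraph_induced: "digraph V A \<Longrightarrow> X \<subseteq> V \<Longrightarrow> digraph X (A \<inter> X \<times> X)"
  unfolding digraph_def by (auto intro: finite_subset)

lemma out_degree_induced:
  "x \<in> X \<Longrightarrow> {w. (x, w) \<in> A} \<subseteq> X \<Longrightarrow> out_degree (A \<inter> X \<times> X) x = out_degree A x"
  unfolding out_degree_def by (rule arg_cong[where f = card]) auto

lemma out_degree_delete_arc:
  assumes "digraph V A" "(x, w) \<in> A"
  shows "out_degree (A - {(x, w)}) y = (if y = x then out_degree A y - 1 else out_degree A y)"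
proof -
  have "{w'. (y, w') \<in> A - {(x, w)}} =
      (if y = x then {w'. (y, w') \<in> A} - {w} else {w'. (y, w') \<in> A})"
    by auto
  then show ?thesis
    using assms(2) finite_out_neighbours[OF assms(1)] unfolding out_degree_def
    by (simp add: card_Diff_singleton)
qed

text \<open>The hypothesis of the theorem, with v0 as a parameter r (the root) that the reductions change.\<close>
definition out_degree_2_except :: "'a set \<Rightarrow> ('a \<times> 'a) set \<Rightarrow> 'a \<Rightarrow> bool" where
  "out_degree_2_except V A r \<longleftrightarrow>
     digraph V A \<and> r \<in> V \<and> 1 \<le> out_degree A r \<and> (\<forall>v \<in> V - {r}. 2 \<le> out_degree A v)"

lemma out_degree_2_except_ge_1:
  assumes "out_degree_2_except V A r" "x \<in> V"
  shows "1 \<le> out_degree A x"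
proof (cases "x = r")
  case False
  then have "2 \<le> out_degree A x" using assms unfolding out_degree_2_except_def by blast
  then show ?thesis by simp
qed (use assms in \<open>simp add: out_degree_2_except_def\<close>)

lemma out_degree_2_except_ge_2:
  "out_degree_2_except V A r \<Longrightarrow> x \<in> V \<Longrightarrow> x \<noteq> r \<Longrightarrow> 2 \<le> out_degree A x"
  unfolding out_degree_2_except_def by blast

lemma out_degree_2_except_induced:
  assumes "out_degree_2_except V A r" "X \<subseteq> V" "r' \<in> X" "r \<in> X \<Longrightarrow> r = r'"
    and "\<And>x. x \<in> X \<Longrightarrow> x \<noteq> r' \<Longrightarrow> {w. (x, w) \<in> A} \<subseteq> X"
    and "1 \<le> out_degree (A \<inter> X \<times> X) r'"
  shows "out_degree_2_except X (A \<inter> X \<times> X) r'"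
  unfolding out_degree_2_except_def
proof (intro conjI ballI)
  show "digraph X (A \<inter> X \<times> X)"
    using assms(1,2) digraph_induced unfolding out_degree_2_except_def by blast
  fix x assume x: "x \<in> X - {r'}"
  then have "out_degree (A \<inter> X \<times> X) x = out_degree A x"
    using out_degree_induced[of x X A] assms(5)[of x] x by blast
  moreover have "x \<in> V - {r}" using x assms(2,4) by blast
  ultimately show "2 \<le> out_degree (A \<inter> X \<times> X) x"
    using assms(1) unfolding out_degree_2_except_def by auto
qed (use assms(3,6) in auto)

lemma out_degree_2_except_out_closed:
  assumes deg: "out_degree_2_except V A r" and R: "R \<subseteq> V" "w \<in> R"
    and closed: "\<And>x. x \<in> R \<Longrightarrow> {y. (x, y) \<in> A} \<subseteq> R"
  shows "out_degree_2_except R (A \<inter> R \<times> R) (if r \<in> R then r else w)"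
proof (rule out_degree_2_except_induced[OF deg R(1)])
  show root: "(if r \<in> R then r else w) \<in> R" using R(2) by auto
  show "1 \<le> out_degree (A \<inter> R \<times> R) (if r \<in> R then r else w)"
    using out_degree_induced[OF root closed[OF root]] out_degree_2_except_ge_1[OF deg] root R(1)
    by auto
qed (use closed in auto)

lemma out_degree_2_except_delete_arc:
  assumes deg: "out_degree_2_except V A r" and xw: "(x, w) \<in> A"
    and surplus: "(if x = r then 1 else 2) < out_degree A x"
  shows "out_degree_2_except V (A - {(x, w)}) r"
proof -
  have dg: "digraph V A" using deg unfolding out_degree_2_except_def by blast
  then have "digraph V (A - {(x, w)})" unfolding digraph_def by blast
  then show ?thesis
    using deg surplus unfolding out_degree_2_except_def out_degree_delete_arc[OF dg xw]
    by (auto split: if_splits)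
qed

lemma out_degree_2_except_delete_source:
  assumes deg: "out_degree_2_except V A r" and v: "v \<in> V" "\<And>u. (u, v) \<notin> A"
  obtains r' where "out_degree_2_except (V - {v}) (A \<inter> (V - {v}) \<times> (V - {v})) r'"
    and "card (A \<inter> (V - {v}) \<times> (V - {v})) < card A"
proof -
  let ?X = "V - {v}"
  have dg: "digraph V A" using deg unfolding out_degree_2_except_def by blast
  have closed: "{w. (x, w) \<in> A} \<subseteq> ?X" for x using dg v(2) unfolding digraph_def by auto
  obtain w where vw: "(v, w) \<in> A"
    using out_degree_2_except_ge_1[OF deg v(1)] by (rule out_degree_ge_1_obtains)
  have "w \<in> ?X" using closed vw by blast
  have "card (A \<inter> ?X \<times> ?X) < card A" using vw finite_arcs[OF dg] by (intro psubset_card_mono) auto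
  with out_degree_2_except_out_closed[OF deg Diff_subset \<open>w \<in> ?X\<close> closed] show thesis
    by (rule that)
qed

lemma out_degree_2_except_delete_root:
  assumes deg: "out_degree_2_except V A r" and in_r: "{y. (y, r) \<in> A} = {u}"
  shows "out_degree_2_except (V - {r}) (A \<inter> (V - {r}) \<times> (V - {r})) u"
    and "card (A \<inter> (V - {r}) \<times> (V - {r})) < card A"
proof -
  have u: "(u, r) \<in> A" "\<And>y. (y, r) \<in> A \<Longrightarrow> y = u" using in_r by auto
  let ?X = "V - {r}"
  have dg: "digraph V A" using deg unfolding out_degree_2_except_def by blast
  then have uX: "u \<in> ?X" using u(1) unfolding digraph_def by auto
  have "{w. (u, w) \<in> A \<inter> ?X \<times> ?X} = {w. (u, w) \<in> A} - {r}"
    using uX dg unfolding digraph_def by auto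
  then have "out_degree (A \<inter> ?X \<times> ?X) u = out_degree A u - 1"
    using u(1) finite_out_neighbours[OF dg] unfolding out_degree_def by (simp add: card_Diff_singleton)
  moreover have "2 \<le> out_degree A u" using deg uX unfolding out_degree_2_except_def by blast
  ultimately have "1 \<le> out_degree (A \<inter> ?X \<times> ?X) u" by simp
  moreover have "{w. (x, w) \<in> A} \<subseteq> ?X" if "x \<in> ?X" "x \<noteq> u" for x
    using dg u(2) that unfolding digraph_def by auto
  ultimately show "out_degree_2_except ?X (A \<inter> ?X \<times> ?X) u"
    using out_degree_2_except_induced[OF deg _ uX] by blast
  show "card (A \<inter> ?X \<times> ?X) < card A"
    using u(1) finite_arcs[OF dg] by (intro psubset_card_mono) auto
qed

lemma out_degree_2_except_contract:
  assumes deg: "out_degree_2_except V A r" and "v \<noteq> r" and in_nbrs: "{y. (y, v) \<in> A} = {u}"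
    and t: "(v, t) \<in> A" "t \<noteq> u" "(u, t) \<notin> A"
  defines "A' \<equiv> insert (u, t) (A \<inter> (V - {v}) \<times> (V - {v}))"
  shows "out_degree_2_except (V - {v}) A' r" and "card A' < card A"
proof -
  have in_v: "(u, v) \<in> A" "\<And>y. (y, v) \<in> A \<Longrightarrow> y = u" using in_nbrs by auto
  let ?X = "V - {v}" and ?N = "\<lambda>x. {w. (x, w) \<in> A}"
  have dg: "digraph V A" and r: "r \<in> V" using deg unfolding out_degree_2_except_def by auto
  have uX: "u \<in> ?X" and tX: "t \<in> ?X" using dg in_v(1) t(1) unfolding digraph_def by auto
  have od: "out_degree A' x = out_degree A x" if "x \<in> ?X" for x
  proof (cases "x = u")
    case True
    have "{w. (x, w) \<in> A'} = insert t (?N u - {v})"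
      using True that dg unfolding A'_def digraph_def by auto
    moreover have "card (insert t (?N u - {v})) = card (?N u)"
      using in_v(1) t(3) finite_out_neighbours[OF dg] card.remove[of "?N u" v] by simp
    ultimately show ?thesis using True unfolding out_degree_def by simp
  next
    case False
    have "{w. (x, w) \<in> A'} = ?N x"
      using False that dg in_v(2) unfolding A'_def digraph_def by auto
    then show ?thesis unfolding out_degree_def by simp
  qed
  have "digraph ?X A'"
    using dg uX tX t(2) unfolding A'_def digraph_def by auto
  then show "out_degree_2_except ?X A' r"
    using deg od r \<open>v \<noteq> r\<close> unfolding out_degree_2_except_def by auto
  have fin: "finite (A \<inter> ?X \<times> ?X)" using finite_arcs[OF dg] by blast
  have "(u, v) \<noteq> (v, t)" using uX by auto
  then have "card (A \<inter> ?X \<times> ?X) + 2 = card (insert (u, v) (insert (v, t) (A \<inter> ?X \<times> ?X)))"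
    using fin by simp
  also have "\<dots> \<le> card A"
    using in_v(1) t(1) finite_arcs[OF dg] by (intro card_mono) auto
  finally show "card A' < card A"
    using fin card_insert_if[OF fin, of "(u, t)"] unfolding A'_def by (auto split: if_splits)
qed

lemma digon_with_common_out_neighbour:
  assumes dg: "digraph V A" and uv: "(u, v) \<in> A"
    and deg: "2 \<le> out_degree A v" "out_degree A u \<le> 2"
    and out_v: "\<And>t. (v, t) \<in> A \<Longrightarrow> t = u \<or> (u, t) \<in> A"
  obtains w where "(v, u) \<in> A" "(u, w) \<in> A" "(v, w) \<in> A" "w \<noteq> v"
proof -
  let ?N = "\<lambda>x. {w. (x, w) \<in> A}"
  have loop: "(x, x) \<notin> A" for x using dg unfolding digraph_def by blast
  obtain a b where ab: "a \<in> ?N v" "b \<in> ?N v" "a \<noteq> b"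
    using deg(1) card_le_Suc0_iff_eq[OF finite_out_neighbours[OF dg, of v]]
    unfolding out_degree_def by fastforce
  then obtain w w' where w: "w \<in> ?N v" "w' \<in> ?N v" "w \<noteq> w'" "w \<noteq> u"
    by (cases "a = u") auto
  have uw: "(u, w) \<in> A" using out_v w(1,4) by auto
  have wv: "w \<noteq> v" using w(1) loop by auto
  have "?N u = {v, w}"
  proof (rule card_seteq[symmetric])
    show "finite (?N u)" by (rule finite_out_neighbours[OF dg])
    show "{v, w} \<subseteq> ?N u" using uv uw by auto
    show "card (?N u) \<le> card {v, w}" using deg(2) wv unfolding out_degree_def by simp
  qed
  then have "(u, w') \<in> A \<longleftrightarrow> w' = v \<or> w' = w" by (simp add: set_eq_iff)
  moreover have "w' \<noteq> v" using w(2) loop by auto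
  ultimately have "w' = u" using out_v w(2,3) by auto
  then show thesis using that uw w(1,2) wv by auto
qed

lemma contains_K3_minus_e_or_out_closed_part:
  assumes deg: "out_degree_2_except V A r" and in_nbrs: "{y. (y, v) \<in> A} = {u}"
    and arcs: "(v, u) \<in> A" "(u, w) \<in> A" "(v, w) \<in> A" "w \<noteq> v"
  shows "contains_K3_minus_e V A \<or>
    (\<exists>R r'. R \<subseteq> V \<and> out_degree_2_except R (A \<inter> R \<times> R) r' \<and> card (A \<inter> R \<times> R) < card A)"
proof -
  have in_v: "(u, v) \<in> A" "\<And>y. (y, v) \<in> A \<Longrightarrow> y = u" using in_nbrs by auto
  let ?W = "V - {v}"
  define R where "R = (A \<inter> ?W \<times> ?W)\<^sup>* `` {w}"
  have dg: "digraph V A" using deg unfolding out_degree_2_except_def by blast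
  have V: "u \<in> V" "v \<in> V" "w \<in> V" and "u \<noteq> w"
    using dg in_v(1) arcs(2) unfolding digraph_def by auto
  have wW: "w \<in> ?W" using V(3) arcs(4) by blast
  have RW: "R \<subseteq> ?W" unfolding R_def using rtrancl_induced_subset[OF _ wW] by blast
  show ?thesis
  proof (cases "u \<in> R")
    case True
    then have "(w, u) \<in> (A \<inter> ?W \<times> ?W)\<^sup>*" unfolding R_def by blast
    then obtain Q where Q: "dipath (A \<inter> ?W \<times> ?W) Q" "hd Q = w" "last Q = u"
      using \<open>u \<noteq> w\<close> by (auto elim: rtrancl_obtains_dipath)
    have "set Q \<subseteq> ?W" using set_dipath_subset[OF Q(1)] by blast
    then have "contains_K3_minus_e V A"
      using contains_K3_bi_minus_e[OF dipath_mono[OF Q(1)] Q(2,3) _ _ arcs(2) in_v(1) arcs(1,3) V(1,3,2)]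
      by blast
    then show ?thesis ..
  next
    case False
    have closed: "{y. (x, y) \<in> A} \<subseteq> R" if "x \<in> R" for x
    proof
      fix y assume "y \<in> {y. (x, y) \<in> A}"
      moreover have "y \<noteq> v" using in_v(2) False that calculation by auto
      ultimately have "(x, y) \<in> A \<inter> ?W \<times> ?W" using RW that dg unfolding digraph_def by auto
      then show "y \<in> R" using that unfolding R_def by (auto intro: rtrancl_into_rtrancl)
    qed
    have "R \<subseteq> V" "w \<in> R" using RW unfolding R_def by blast+
    then have "out_degree_2_except R (A \<inter> R \<times> R) (if r \<in> R then r else w)"
      by (rule out_degree_2_except_out_closed[OF deg _ _ closed])
    moreover have "card (A \<inter> R \<times> R) < card A"
      using in_v(1) False finite_arcs[OF dg] by (intro psubset_card_mono) auto
    ultimately show ?thesis using RW by blast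
  qed
qed

definition reducible :: "'a set \<Rightarrow> ('a \<times> 'a) set \<Rightarrow> bool" where
  "reducible V A \<longleftrightarrow>
     (\<exists>V' A' (r' :: 'a). out_degree_2_except V' A' r' \<and> card A' < card A \<and>
        (contains_K3_minus_e V' A' \<longrightarrow> contains_K3_minus_e V A))"

lemma reducibleI:
  fixes V V' :: "'a set"
  assumes "out_degree_2_except V' A' r'" "card A' < card A"
    and "contains_K3_minus_e V' A' \<Longrightarrow> contains_K3_minus_e V A"
  shows "reducible V A"
  unfolding reducible_def using assms by blast

lemma reducibleI_induced:
  assumes "X \<subseteq> V" "out_degree_2_except X (A \<inter> X \<times> X) r'" "card (A \<inter> X \<times> X) < card A"
  shows "reducible V A"
  using assms(2,3) by (rule reducibleI) (rule contains_subdivision_mono[OF _ assms(1)], auto)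

lemma out_degree_2_except_unique_in_neighbour_reduction:
  assumes deg: "out_degree_2_except V A r"
    and tight: "\<forall>x\<in>V. out_degree A x \<le> (if x = r then 1 else 2)"
    and v: "v \<in> V" "v \<noteq> r" and in_nbrs: "{y. (y, v) \<in> A} = {u}"
  shows "contains_K3_minus_e V A \<or> reducible V A"
proof (cases "\<exists>t. (v, t) \<in> A \<and> t \<noteq> u \<and> (u, t) \<notin> A")
  case True
  then obtain t where t: "(v, t) \<in> A" "t \<noteq> u" "(u, t) \<notin> A" by blast
  have uv: "(u, v) \<in> A" using in_nbrs by auto
  from out_degree_2_except_contract[OF deg v(2) in_nbrs t] have "reducible V A"
  proof (rule reducibleI)
    show "contains_K3_minus_e V A"
      if "contains_K3_minus_e (V - {v}) (insert (u, t) (A \<inter> (V - {v}) \<times> (V - {v})))"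
      by (rule contains_subdivision_subdivide_arc[OF that K3_bi_minus_e_A_subset _ v(1) _ uv t(1)])
        auto
  qed
  then show ?thesis ..
next
  case False
  then have out_v: "\<And>t. (v, t) \<in> A \<Longrightarrow> t = u \<or> (u, t) \<in> A" by blast
  have dg: "digraph V A" using deg unfolding out_degree_2_except_def by blast
  have uv: "(u, v) \<in> A" using in_nbrs by auto
  then have "u \<in> V" using dg unfolding digraph_def by auto
  then have "out_degree A u \<le> (if u = r then 1 else 2)" using tight by blast
  then have "out_degree A u \<le> 2" by (simp split: if_splits)
  with out_degree_2_except_ge_2[OF deg v]
  obtain w where "(v, u) \<in> A" "(u, w) \<in> A" "(v, w) \<in> A" "w \<noteq> v"
    by (rule digon_with_common_out_neighbour[OF dg uv _ _ out_v])
  from contains_K3_minus_e_or_out_closed_part[OF deg in_nbrs this]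
  consider "contains_K3_minus_e V A"
    | R r' where "R \<subseteq> V" "out_degree_2_except R (A \<inter> R \<times> R) r'" "card (A \<inter> R \<times> R) < card A"
    by blast
  then show ?thesis
  proof cases
    case 2
    then have "reducible V A" by (rule reducibleI_induced)
    then show ?thesis ..
  qed (rule disjI1)
qed

lemma out_degree_2_except_tight_reduction:
  assumes deg: "out_degree_2_except V A r"
    and tight: "\<forall>x\<in>V. out_degree A x \<le> (if x = r then 1 else 2)"
  shows "contains_K3_minus_e V A \<or> reducible V A"
proof -
  have dg: "digraph V A" and r: "r \<in> V" using deg unfolding out_degree_2_except_def by auto
  obtain v where v: "v \<in> V" "in_degree A v \<le> 1" using exists_in_degree_le_1[OF dg r tight] .
  from dg v(2) show ?thesis
  proof (cases rule: in_degree_le_1_cases)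
    case 1
    obtain r' where "out_degree_2_except (V - {v}) (A \<inter> (V - {v}) \<times> (V - {v})) r'"
      and "card (A \<inter> (V - {v}) \<times> (V - {v})) < card A"
      using out_degree_2_except_delete_source[OF deg v(1) 1] .
    then have "reducible V A" by (rule reducibleI_induced[OF Diff_subset])
    then show ?thesis ..
  next
    case (2 u)
    show ?thesis
    proof (cases "v = r")
      case True
      from out_degree_2_except_delete_root[OF deg 2[unfolded True]] have "reducible V A"
        by (rule reducibleI_induced[OF Diff_subset])
      then show ?thesis ..
    next
      case False
      from out_degree_2_except_unique_in_neighbour_reduction[OF deg tight v(1) False 2]
      show ?thesis .
    qed
  qed
qed

lemma out_degree_2_except_reduction:
  assumes deg: "out_degree_2_except V A r"
  shows "contains_K3_minus_e V A \<or> reducible V A"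
proof (cases "\<exists>x\<in>V. (if x = r then 1 else 2) < out_degree A x")
  case True
  then obtain x where x: "x \<in> V" "(if x = r then 1 else 2) < out_degree A x" by blast
  then have "1 \<le> out_degree A x" by (simp split: if_splits)
  then obtain w where xw: "(x, w) \<in> A" by (rule out_degree_ge_1_obtains)
  have dg: "digraph V A" using deg unfolding out_degree_2_except_def by blast
  from out_degree_2_except_delete_arc[OF deg xw x(2)] card_Diff1_less[OF finite_arcs[OF dg] xw]
  have "reducible V A"
    by (rule reducibleI) (rule contains_subdivision_mono[OF _ subset_refl Diff_subset])
  then show ?thesis ..
next
  case False
  then have "\<forall>x\<in>V. out_degree A x \<le> (if x = r then 1 else 2)" by (simp add: not_less)
  then show ?thesis by (rule out_degree_2_except_tight_reduction[OF deg])
qed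

theorem proposition4p1:
  fixes V :: "'a set" and A :: "('a \<times> 'a) set" and v0 :: 'a
  assumes "digraph V A"
    and "v0 \<in> V"
    and "out_degree A v0 \<ge> 1"
    and "\<forall>v \<in> V - {v0}. out_degree A v \<ge> 2"
  shows "contains_subdivision K3_bi_minus_e_V K3_bi_minus_e_A V A"
  using assms
proof (induction "card A" arbitrary: V A v0 rule: less_induct)
  case less
  then have "out_degree_2_except V A v0" unfolding out_degree_2_except_def by blast
  then have "contains_K3_minus_e V A \<or> reducible V A" by (rule out_degree_2_except_reduction)
  then show ?case
  proof
    assume "reducible V A"
    then obtain V' A' and r' :: 'a where smaller: "out_degree_2_except V' A' r'" "card A' < card A"
      and lift: "contains_K3_minus_e V' A' \<Longrightarrow> contains_K3_minus_e V A"
      unfolding reducible_def by blast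
    show ?thesis
      using less.hyps[OF smaller(2)] smaller(1) lift unfolding out_degree_2_except_def by blast
  qed
qed

end
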